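(* Let $\Delta x>0$, $\Delta t>0$, let $a=(a_j)$, $b=(b_j)$ be sequences in $\ell^2_\Delta(\mathbb Z)$ (with $b$ bounded and $D_+b$ bounded) and $\sigma\in\{0,1\}$. Then $$\begin{aligned}\langle D_+D_+D_-(a),D(ab)\rangle\le{}&\frac{\Delta t}{4}\langle|D_+(b)|+|D_-(b)|,(D_+D_+D_-(a))^2\rangle+\frac{1}{4\Delta t}\langle|D_-(b)|+|D_+(b)|,a^2\rangle\\&+\frac12\Big\langle\|D_+(b)\|^\sigma_{\ell^\infty}\mathbf 1-\frac{\Delta x}{2}D_-(b),(D_+D_-(a))^2\Big\rangle+\frac12\|D_+(b)\|^{2-\sigma}_{\ell^\infty}\|D_+(a)\|^2_{\ell^2_\Delta}-\langle b,(D_+D(a))^2\rangle.\end{aligned}$$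
   Context: For sequences: $D_+(a)_j=(a_{j+1}-a_j)/\Delta x$, $D_-(a)_j=(a_j-a_{j-1})/\Delta x$, $D=\frac12(D_++D_-)$; products, squares and absolute values are componentwise; $\mathbf 1=(1,1,\dots)$; $\langle a,b\rangle=\Delta x\sum_ja_jb_j$, $\|a\|_{\ell^2_\Delta}=\langle a,a\rangle^{1/2}$, $\|a\|_{\ell^\infty}=\sup_j|a_j|$. *)

theory Defs
  imports "HOL-Analysis.Analysis"
begin

definition Dp :: "real \<Rightarrow> (int \<Rightarrow> real) \<Rightarrow> int \<Rightarrow> real" where
  "Dp dx a j = (a (j + 1) - a j) / dx"

definition Dm :: "real \<Rightarrow> (int \<Rightarrow> real) \<Rightarrow> int \<Rightarrow> real" where
  "Dm dx a j = (a j - a (j - 1)) / dx"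

definition Dc :: "real \<Rightarrow> (int \<Rightarrow> real) \<Rightarrow> int \<Rightarrow> real" where
  "Dc dx a j = (Dp dx a j + Dm dx a j) / 2"

definition ip :: "real \<Rightarrow> (int \<Rightarrow> real) \<Rightarrow> (int \<Rightarrow> real) \<Rightarrow> real" where
  "ip dx a b = dx * infsum (\<lambda>j. a j * b j) UNIV"

definition l2norm :: "real \<Rightarrow> (int \<Rightarrow> real) \<Rightarrow> real" where
  "l2norm dx a = sqrt (ip dx a a)"

definition linfnorm :: "(int \<Rightarrow> real) \<Rightarrow> real" where
  "linfnorm a = (SUP j. \<bar>a j\<bar>)"

definition in_l2 :: "(int \<Rightarrow> real) \<Rightarrow> bool" where
  "in_l2 a \<longleftrightarrow> (\<lambda>j. (a j)\<^sup>2) summable_on UNIV"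

end

theory Submission
  imports Defs
begin

(* By the discrete product rule, D(ab) = b D(a) + (a(j+1) D+(b) + a(j-1) D-(b))/2. Summing the
   first part against D+D+D-(a) by parts gives -<b,(D+D(a))^2>, the term -(dx/4) D-(b) (D+D-(a))^2
   and a cross term D-(b) D+D-(a) D-(a), which Young's inequality splits with the weights
   |D+b|^sigma and |D+b|^(2-sigma); the two remaining parts are split by Young's inequality with
   weight dt. All of this holds pointwise up to differences G(j+1) - G(j) of a summable
   sequence G (this also moves a(j+-1)^2 to a(j)^2 and D-(a) to D+(a)), and such differences
   sum to zero over Z. *)

lemma Dm_eq_Dp_shift: "Dm dx f j = Dp dx f (j - 1)"
  by (simp add: Dm_def Dp_def)

lemma bounded_range_shift:
  fixes f :: "int \<Rightarrow> real"
  assumes "bounded (range f)"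
  shows "bounded (range (\<lambda>j. f (j + k)))"
  using assms by (rule bounded_subset) auto

lemma bounded_range_abs:
  fixes f :: "'a \<Rightarrow> real"
  shows "bounded (range f) \<Longrightarrow> bounded (range (\<lambda>j. \<bar>f j\<bar>))"
  by (simp add: bounded_iff)

lemma bounded_range_cmult:
  fixes f :: "'a \<Rightarrow> real"
  shows "bounded (range f) \<Longrightarrow> bounded (range (\<lambda>j. c * f j))"
  using bounded_scaleR_comp[of f UNIV c] by simp

lemma abs_le_linfnorm:
  assumes "bounded (range f)"
  shows "\<bar>f j\<bar> \<le> linfnorm f"
  unfolding linfnorm_def
  using bounded_imp_bdd_above[OF bounded_range_abs[OF assms]] by (intro cSUP_upper) auto

lemma bounded_range_Dm:
  "bounded (range (Dp dx f)) \<Longrightarrow> bounded (range (Dm dx f))"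
  using bounded_range_shift[of "Dp dx f" "-1"] by (simp add: Dm_eq_Dp_shift[abs_def])

lemma in_l2_shift: "in_l2 f \<Longrightarrow> in_l2 (\<lambda>j. f (j + k))"
  unfolding in_l2_def
  using summable_on_reindex_bij_betw[of "\<lambda>j. j + k" UNIV UNIV "\<lambda>j. (f j)\<^sup>2"]
  by (simp add: bij_betw_def inj_on_def image_iff)

lemma in_l2_add:
  assumes "in_l2 f" "in_l2 g"
  shows "in_l2 (\<lambda>j. f j + g j)"
  unfolding in_l2_def
proof (rule summable_on_comparison_test)
  show "(\<lambda>j. 2 * (f j)\<^sup>2 + 2 * (g j)\<^sup>2) summable_on UNIV"
    using assms unfolding in_l2_def by (intro summable_on_add summable_on_cmult_right)
  fix j
  have "0 \<le> (f j - g j)\<^sup>2" by simp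
  then show "(f j + g j)\<^sup>2 \<le> 2 * (f j)\<^sup>2 + 2 * (g j)\<^sup>2"
    by (simp add: power2_eq_square algebra_simps)
qed simp

lemma in_l2_bounded_mult:
  assumes "bounded (range c)" "in_l2 f"
  shows "in_l2 (\<lambda>j. c j * f j)"
proof -
  obtain B where B: "\<And>j. \<bar>c j\<bar> \<le> B" using assms(1) by (auto simp: bounded_iff)
  show ?thesis unfolding in_l2_def
  proof (rule summable_on_comparison_test)
    show "(\<lambda>j. B\<^sup>2 * (f j)\<^sup>2) summable_on UNIV"
      using assms(2) unfolding in_l2_def by (rule summable_on_cmult_right)
    fix j
    have "(c j)\<^sup>2 \<le> B\<^sup>2"
      using B[of j] by (metis abs_le_square_iff abs_of_nonneg abs_ge_zero order_trans)
    then show "(c j * f j)\<^sup>2 \<le> B\<^sup>2 * (f j)\<^sup>2"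
      by (simp add: power_mult_distrib mult_right_mono)
  qed simp
qed

lemma in_l2_cmult: "in_l2 f \<Longrightarrow> in_l2 (\<lambda>j. c * f j)"
  by (rule in_l2_bounded_mult) auto

lemma in_l2_diff: "in_l2 f \<Longrightarrow> in_l2 g \<Longrightarrow> in_l2 (\<lambda>j. f j - g j)"
  using in_l2_add[of f "\<lambda>j. (-1) * g j"] in_l2_cmult[of g "-1"] by simp

lemma in_l2_Dp: "in_l2 f \<Longrightarrow> in_l2 (Dp dx f)"
  unfolding Dp_def[abs_def] diff_divide_distrib
  using in_l2_diff[OF in_l2_cmult in_l2_cmult, of "\<lambda>j. f (j + 1)" f "1 / dx" "1 / dx"] in_l2_shift
  by (simp add: field_simps)

lemma in_l2_Dm:
  assumes "in_l2 f"
  shows "in_l2 (Dm dx f)"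
proof -
  have "Dm dx f = Dp dx (\<lambda>j. f (j + -1))" by (simp add: fun_eq_iff Dm_def Dp_def)
  with assms show ?thesis by (metis in_l2_Dp in_l2_shift)
qed

lemma in_l2_Dc: "in_l2 f \<Longrightarrow> in_l2 (Dc dx f)"
  unfolding Dc_def[abs_def]
  using in_l2_cmult[OF in_l2_add[OF in_l2_Dp[of f dx] in_l2_Dm[of f dx]], of "1 / 2"] by simp

lemma summable_on_l2_mult:
  assumes "in_l2 f" "in_l2 g"
  shows "(\<lambda>j. f j * g j) summable_on UNIV"
proof -
  have "(\<lambda>j. 1/4 * (f j + g j)\<^sup>2 + (-1/4) * (f j - g j)\<^sup>2) summable_on UNIV"
    using in_l2_add[OF assms] in_l2_diff[OF assms] unfolding in_l2_def
    by (intro summable_on_add summable_on_cmult_right)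
  then show ?thesis by (simp add: power2_eq_square algebra_simps)
qed

lemma summable_on_bounded_l2_mult:
  assumes "bounded (range c)" "in_l2 f" "in_l2 g"
  shows "(\<lambda>j. c j * (f j * g j)) summable_on UNIV"
  using summable_on_l2_mult[OF in_l2_bounded_mult[OF assms(1,2)] assms(3)] by (simp add: mult.assoc)

lemma summable_on_bounded_l2_sq:
  assumes "bounded (range c)" "in_l2 f"
  shows "(\<lambda>j. c j * (f j)\<^sup>2) summable_on UNIV"
  using summable_on_bounded_l2_mult[OF assms assms(2)] by (simp add: power2_eq_square)

lemma has_sum_diff:
  fixes f g :: "'a \<Rightarrow> 'b::topological_ab_group_add"
  assumes "(f has_sum x) A" "(g has_sum y) A"
  shows "((\<lambda>j. f j - g j) has_sum (x - y)) A"
proof -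
  have "((\<lambda>j. - g j) has_sum - y) A" using assms(2) by (simp add: has_sum_uminus)
  from has_sum_add[OF assms(1) this] show ?thesis by simp
qed

lemma has_sum_telescoping:
  fixes G :: "int \<Rightarrow> real"
  assumes "G summable_on UNIV"
  shows "((\<lambda>j. G (j + 1) - G j) has_sum 0) UNIV"
proof -
  have "bij_betw (\<lambda>j::int. j + 1) UNIV UNIV"
    by (rule bij_betwI[where g = "\<lambda>j. j - 1"]) auto
  then have "((\<lambda>j. G (j + 1)) has_sum infsum G UNIV) UNIV"
    using has_sum_reindex_bij_betw[of "\<lambda>j. j + 1" UNIV UNIV G] assms by (simp add: comp_def)
  from has_sum_diff[OF this has_sum_infsum[OF assms]] show ?thesis by simp
qed

lemma infsum_le_telescoping:
  fixes f r G :: "int \<Rightarrow> real"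
  assumes "f summable_on UNIV" "r summable_on UNIV" "G summable_on UNIV"
    and "\<And>j. f j \<le> r j + (G (j + 1) - G j)"
  shows "infsum f UNIV \<le> infsum r UNIV"
  using has_sum_mono[OF has_sum_infsum[OF assms(1)]
      has_sum_add[OF has_sum_infsum[OF assms(2)] has_sum_telescoping[OF assms(3)]] assms(4)]
  by simp

lemma Dc_mult:
  assumes "dx \<noteq> 0"
  shows "Dc dx (\<lambda>j. a j * b j) j
    = b j * Dc dx a j + 1/2 * a (j + 1) * Dp dx b j + 1/2 * a (j - 1) * Dm dx b j"
  using assms by (simp add: Dc_def Dp_def Dm_def field_simps)

definition summation_by_parts_flux :: "real \<Rightarrow> (int \<Rightarrow> real) \<Rightarrow> (int \<Rightarrow> real) \<Rightarrow> int \<Rightarrow> real" where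
  "summation_by_parts_flux dx a b j = b j * Dc dx a j * Dp dx (Dm dx a) j / dx
     - b (j - 1) * (Dp dx (Dm dx a) j)\<^sup>2 / 4 - Dp dx (Dm dx a) j * Dc dx a j * Dm dx b j"

lemma Dp_Dp_Dm_mult_Dc_eq:
  assumes "dx \<noteq> 0"
  shows "Dp dx (Dp dx (Dm dx a)) j * b j * Dc dx a j
    = - b j * (Dp dx (Dc dx a) j)\<^sup>2 - dx/4 * Dm dx b j * (Dp dx (Dm dx a) j)\<^sup>2
      - Dm dx b j * Dp dx (Dm dx a) j * Dm dx a j + summation_by_parts_flux dx a b (j + 1) - summation_by_parts_flux dx a b j"
  using assms by (simp add: summation_by_parts_flux_def Dc_def Dp_def Dm_def field_simps power2_eq_square)

lemma weighted_young:
  fixes x y c t :: real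
  assumes "t > 0"
  shows "1/2 * x * y * c \<le> t/4 * \<bar>c\<bar> * x\<^sup>2 + 1/(4*t) * \<bar>c\<bar> * y\<^sup>2"
proof -
  have "0 \<le> (t * \<bar>x\<bar> - \<bar>y\<bar>)\<^sup>2" by simp
  then have "2 * t * (\<bar>x\<bar> * \<bar>y\<bar>) \<le> t\<^sup>2 * x\<^sup>2 + y\<^sup>2"
    by (simp add: power2_eq_square algebra_simps)
  then have xy: "\<bar>x\<bar> * \<bar>y\<bar> \<le> t/2 * x\<^sup>2 + 1/(2*t) * y\<^sup>2"
    using assms by (simp add: field_simps power2_eq_square)
  have "1/2 * x * y * c \<le> 1/2 * \<bar>c\<bar> * (\<bar>x\<bar> * \<bar>y\<bar>)"
    by (simp add: abs_mult[symmetric] abs_ge_self mult.commute mult.left_commute)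
  also have "\<dots> \<le> 1/2 * \<bar>c\<bar> * (t/2 * x\<^sup>2 + 1/(2*t) * y\<^sup>2)"
    by (rule mult_left_mono[OF xy]) simp
  also have "\<dots> = t/4 * \<bar>c\<bar> * x\<^sup>2 + 1/(4*t) * \<bar>c\<bar> * y\<^sup>2"
    by (simp add: field_simps)
  finally show ?thesis .
qed

lemma young_power_split:
  fixes M v q L :: real and s :: nat
  assumes "\<bar>M\<bar> \<le> L" "s \<in> {0, 1}"
  shows "- M * v * q \<le> 1/2 * L^s * v\<^sup>2 + 1/2 * L^(2-s) * q\<^sup>2"
proof -
  have "- M * v * q \<le> \<bar>M\<bar> * (\<bar>v\<bar> * \<bar>q\<bar>)"
    by (metis abs_ge_minus_self abs_mult mult.assoc mult_minus_left)
  also have "\<dots> \<le> L * (\<bar>v\<bar> * \<bar>q\<bar>)"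
    by (rule mult_right_mono[OF assms(1)]) simp
  also have "\<dots> \<le> 1/2 * L^s * v\<^sup>2 + 1/2 * L^(2-s) * q\<^sup>2"
  proof (cases "s = 0")
    case True
    have "0 \<le> (\<bar>v\<bar> - L * \<bar>q\<bar>)\<^sup>2" by simp
    then show ?thesis using True by (simp add: power2_eq_square algebra_simps)
  next
    case False
    with assms(2) have "s = 1" by auto
    moreover have "0 \<le> L * (\<bar>v\<bar> - \<bar>q\<bar>)\<^sup>2" using assms(1) by simp
    ultimately show ?thesis by (simp add: power2_eq_square algebra_simps)
  qed
  finally show ?thesis .
qed

definition energy_flux ::
    "real \<Rightarrow> real \<Rightarrow> real \<Rightarrow> nat \<Rightarrow> (int \<Rightarrow> real) \<Rightarrow> (int \<Rightarrow> real) \<Rightarrow> int \<Rightarrow> real" where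
  "energy_flux dx dt L s a b j = summation_by_parts_flux dx a b j
     + 1/(4*dt) * \<bar>Dm dx b j\<bar> * ((a j)\<^sup>2 - (a (j - 1))\<^sup>2) - 1/2 * L^(2-s) * (Dm dx a j)\<^sup>2"

definition bound_density ::
    "real \<Rightarrow> real \<Rightarrow> real \<Rightarrow> nat \<Rightarrow> (int \<Rightarrow> real) \<Rightarrow> (int \<Rightarrow> real) \<Rightarrow> int \<Rightarrow> real" where
  "bound_density dx dt L s a b j
     = dt / 4 * ((\<bar>Dp dx b j\<bar> + \<bar>Dm dx b j\<bar>) * (Dp dx (Dp dx (Dm dx a)) j)\<^sup>2)
     + 1 / (4 * dt) * ((\<bar>Dm dx b j\<bar> + \<bar>Dp dx b j\<bar>) * (a j)\<^sup>2)
     + 1 / 2 * ((L ^ s - dx / 2 * Dm dx b j) * (Dp dx (Dm dx a) j)\<^sup>2)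
     + 1 / 2 * L ^ (2 - s) * (Dp dx a j * Dp dx a j)
     - b j * (Dp dx (Dc dx a) j)\<^sup>2"

lemma pointwise_estimate:
  assumes "dx \<noteq> 0" "dt > 0" "\<And>i. \<bar>Dp dx b i\<bar> \<le> L" "s \<in> {0, 1}"
  shows "Dp dx (Dp dx (Dm dx a)) j * Dc dx (\<lambda>j. a j * b j) j
    \<le> bound_density dx dt L s a b j
       + (energy_flux dx dt L s a b (j + 1) - energy_flux dx dt L s a b j)"
proof -
  note dx = assms(1)
  have shift_a: "Dm dx a (j + 1) = Dp dx a j" and shift_b: "Dm dx b (j + 1) = Dp dx b j"
    by (simp_all add: Dm_eq_Dp_shift)
  have "\<bar>Dm dx b j\<bar> \<le> L" using assms(3) by (simp add: Dm_eq_Dp_shift)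
  note young = young_power_split[OF this assms(4), of "Dp dx (Dm dx a) j" "Dm dx a j"]
    weighted_young[OF assms(2), of "Dp dx (Dp dx (Dm dx a)) j" "a (j + 1)" "Dp dx b j"]
    weighted_young[OF assms(2), of "Dp dx (Dp dx (Dm dx a)) j" "a (j - 1)" "Dm dx b j"]
  have "bound_density dx dt L s a b j
      + (energy_flux dx dt L s a b (j + 1) - energy_flux dx dt L s a b j)
    = dt/4 * \<bar>Dp dx b j\<bar> * (Dp dx (Dp dx (Dm dx a)) j)\<^sup>2 + 1/(4*dt) * \<bar>Dp dx b j\<bar> * (a (j + 1))\<^sup>2
      + (dt/4 * \<bar>Dm dx b j\<bar> * (Dp dx (Dp dx (Dm dx a)) j)\<^sup>2 + 1/(4*dt) * \<bar>Dm dx b j\<bar> * (a (j - 1))\<^sup>2)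
      + (1/2 * L^s * (Dp dx (Dm dx a) j)\<^sup>2 + 1/2 * L^(2-s) * (Dm dx a j)\<^sup>2)
      - b j * (Dp dx (Dc dx a) j)\<^sup>2 - dx/4 * Dm dx b j * (Dp dx (Dm dx a) j)\<^sup>2
      + summation_by_parts_flux dx a b (j + 1) - summation_by_parts_flux dx a b j"
    unfolding bound_density_def energy_flux_def shift_a shift_b
    using assms(2) by (simp add: field_simps power2_eq_square)
  then show ?thesis
    unfolding Dc_mult[OF dx] distrib_left
    using Dp_Dp_Dm_mult_Dc_eq[OF dx, of a j b] young by (simp add: algebra_simps)
qed

lemma summable_on_energy_flux:
  assumes "in_l2 a" "bounded (range b)" "bounded (range (Dm dx b))"
  shows "energy_flux dx dt L s a b summable_on UNIV"
proof -
  have const: "bounded (range (\<lambda>j::int. c))" for c :: real by simp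
  have b1: "bounded (range (\<lambda>j. b (j - 1)))"
    using bounded_range_shift[OF assms(2), of "-1"] by simp
  have a1: "in_l2 (\<lambda>j. a (j - 1))"
    using in_l2_shift[OF assms(1), of "-1"] by simp
  have Dmb: "bounded (range (\<lambda>j. \<bar>Dm dx b j\<bar>))" by (rule bounded_range_abs[OF assms(3)])
  note l2 = in_l2_Dc[OF assms(1)] in_l2_Dp[OF in_l2_Dm[OF assms(1)]] in_l2_Dm[OF assms(1)]
    assms(1) a1
  have "energy_flux dx dt L s a b = (\<lambda>j. (1/dx * b j) * (Dc dx a j * Dp dx (Dm dx a) j)
      + (-1/4 * b (j - 1)) * (Dp dx (Dm dx a) j * Dp dx (Dm dx a) j)
      + (- Dm dx b j) * (Dp dx (Dm dx a) j * Dc dx a j)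
      + (1/(4*dt) * \<bar>Dm dx b j\<bar>) * (a j * a j)
      + (-1/(4*dt) * \<bar>Dm dx b j\<bar>) * (a (j - 1) * a (j - 1))
      + (-1/2 * L^(2-s)) * (Dm dx a j * Dm dx a j))"
    unfolding energy_flux_def summation_by_parts_flux_def power2_eq_square by (rule ext) (simp add: algebra_simps)
  then show ?thesis
    by (simp only:) (intro summable_on_add
        summable_on_bounded_l2_mult[OF bounded_range_cmult[OF assms(2)] l2(1,2)]
        summable_on_bounded_l2_mult[OF bounded_range_cmult[OF b1] l2(2,2)]
        summable_on_bounded_l2_mult[OF uminus_bounded_comp[THEN iffD2, OF assms(3)] l2(2,1)]
        summable_on_bounded_l2_mult[OF bounded_range_cmult[OF Dmb] l2(4,4)]
        summable_on_bounded_l2_mult[OF bounded_range_cmult[OF Dmb] l2(5,5)]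
        summable_on_bounded_l2_mult[OF const l2(3,3)])
qed

lemma bound_density_sum:
  assumes "dx > 0" "in_l2 a" "bounded (range b)" "bounded (range (Dp dx b))"
  shows "bound_density dx dt L s a b summable_on UNIV" (is ?summable)
    and "dx * infsum (bound_density dx dt L s a b) UNIV
      = dt / 4 * ip dx (\<lambda>j. \<bar>Dp dx b j\<bar> + \<bar>Dm dx b j\<bar>) (\<lambda>j. (Dp dx (Dp dx (Dm dx a)) j)\<^sup>2)
      + 1 / (4 * dt) * ip dx (\<lambda>j. \<bar>Dm dx b j\<bar> + \<bar>Dp dx b j\<bar>) (\<lambda>j. (a j)\<^sup>2)
      + 1 / 2 * ip dx (\<lambda>j. L ^ s - dx / 2 * Dm dx b j) (\<lambda>j. (Dp dx (Dm dx a) j)\<^sup>2)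
      + 1 / 2 * L ^ (2 - s) * (l2norm dx (Dp dx a))\<^sup>2
      - ip dx b (\<lambda>j. (Dp dx (Dc dx a) j)\<^sup>2)" (is ?sum)
proof -
  let ?S = "\<lambda>f. infsum f UNIV"
  have Dmb: "bounded (range (Dm dx b))" using assms(4) by (rule bounded_range_Dm)
  have weight1: "bounded (range (\<lambda>j. \<bar>Dp dx b j\<bar> + \<bar>Dm dx b j\<bar>))"
    and weight2: "bounded (range (\<lambda>j. \<bar>Dm dx b j\<bar> + \<bar>Dp dx b j\<bar>))"
    using assms(4) Dmb by (auto intro!: bounded_plus_comp bounded_range_abs)
  from bounded_minus_comp[OF _ bounded_range_cmult[OF Dmb, of "dx / 2"], of "\<lambda>j. L ^ s"]
  have weight3: "bounded (range (\<lambda>j. L ^ s - dx / 2 * Dm dx b j))" by simp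
  have "in_l2 (Dp dx (Dp dx (Dm dx a)))" "in_l2 (Dp dx (Dm dx a))" "in_l2 (Dp dx a)"
    "in_l2 (Dp dx (Dc dx a))"
    using assms(2) by (auto intro: in_l2_Dp in_l2_Dm in_l2_Dc)
  note l2 = this assms(2)
  define t1 where "t1 j = (\<bar>Dp dx b j\<bar> + \<bar>Dm dx b j\<bar>) * (Dp dx (Dp dx (Dm dx a)) j)\<^sup>2" for j
  define t2 where "t2 j = (\<bar>Dm dx b j\<bar> + \<bar>Dp dx b j\<bar>) * (a j)\<^sup>2" for j
  define t3 where "t3 j = (L ^ s - dx / 2 * Dm dx b j) * (Dp dx (Dm dx a) j)\<^sup>2" for j
  define t4 where "t4 j = Dp dx a j * Dp dx a j" for j
  define t5 where "t5 j = b j * (Dp dx (Dc dx a) j)\<^sup>2" for j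
  have "t1 summable_on UNIV" "t2 summable_on UNIV" "t3 summable_on UNIV"
    "t4 summable_on UNIV" "t5 summable_on UNIV"
    unfolding t1_def[abs_def] t2_def[abs_def] t3_def[abs_def] t4_def[abs_def] t5_def[abs_def]
    using summable_on_bounded_l2_sq[OF weight1 l2(1)] summable_on_bounded_l2_sq[OF weight2 l2(5)]
      summable_on_bounded_l2_sq[OF weight3 l2(2)] summable_on_l2_mult[OF l2(3,3)]
      summable_on_bounded_l2_sq[OF assms(3) l2(4)]
    by simp_all
  then have sum: "(bound_density dx dt L s a b has_sum
      dt / 4 * ?S t1 + 1 / (4 * dt) * ?S t2 + 1 / 2 * ?S t3 + 1 / 2 * L ^ (2 - s) * ?S t4 - ?S t5) UNIV"
    unfolding bound_density_def[abs_def] t1_def t2_def t3_def t4_def t5_def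
    by (intro has_sum_diff has_sum_add has_sum_cmult_right has_sum_infsum)
  then show ?summable by (rule has_sum_imp_summable)
  have "(l2norm dx (Dp dx a))\<^sup>2 = dx * ?S t4"
    using assms(1) infsum_nonneg[of UNIV t4] unfolding l2norm_def ip_def t4_def by simp
  with arg_cong[where f = "\<lambda>x. dx * x", OF infsumI[OF sum]] show ?sum
    unfolding ip_def t1_def[symmetric] t2_def[symmetric] t3_def[symmetric] t5_def[symmetric]
    by (simp add: algebra_simps)
qed

theorem lemma9:
  fixes dx dt :: real and a b :: "int \<Rightarrow> real" and \<sigma> :: nat
  assumes "dx > 0" and "dt > 0"
    and "in_l2 a" and "in_l2 b"
    and "bounded (range b)" and "bounded (range (Dp dx b))"
    and "\<sigma> \<in> {0, 1}"
  shows "ip dx (Dp dx (Dp dx (Dm dx a))) (Dc dx (\<lambda>j. a j * b j))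
    \<le> dt / 4 * ip dx (\<lambda>j. \<bar>Dp dx b j\<bar> + \<bar>Dm dx b j\<bar>) (\<lambda>j. (Dp dx (Dp dx (Dm dx a)) j)\<^sup>2)
     + 1 / (4 * dt) * ip dx (\<lambda>j. \<bar>Dm dx b j\<bar> + \<bar>Dp dx b j\<bar>) (\<lambda>j. (a j)\<^sup>2)
     + 1 / 2 * ip dx (\<lambda>j. linfnorm (Dp dx b) ^ \<sigma> - dx / 2 * Dm dx b j) (\<lambda>j. (Dp dx (Dm dx a) j)\<^sup>2)
     + 1 / 2 * linfnorm (Dp dx b) ^ (2 - \<sigma>) * (l2norm dx (Dp dx a))\<^sup>2
     - ip dx b (\<lambda>j. (Dp dx (Dc dx a) j)\<^sup>2)"
proof -
  define L where "L = linfnorm (Dp dx b)"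
  have ab: "in_l2 (\<lambda>j. a j * b j)"
    using in_l2_bounded_mult[OF assms(5,3)] by (simp add: mult.commute)
  have "infsum (\<lambda>j. Dp dx (Dp dx (Dm dx a)) j * Dc dx (\<lambda>j. a j * b j) j) UNIV
      \<le> infsum (bound_density dx dt L \<sigma> a b) UNIV"
  proof (rule infsum_le_telescoping)
    show "(\<lambda>j. Dp dx (Dp dx (Dm dx a)) j * Dc dx (\<lambda>j. a j * b j) j) summable_on UNIV"
      by (intro summable_on_l2_mult in_l2_Dp in_l2_Dm in_l2_Dc assms(3) ab)
    show "bound_density dx dt L \<sigma> a b summable_on UNIV"
      using assms(1,3,5,6) by (rule bound_density_sum(1))
    show "energy_flux dx dt L \<sigma> a b summable_on UNIV"
      using assms(3,5) bounded_range_Dm[OF assms(6)] by (rule summable_on_energy_flux)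
    show "Dp dx (Dp dx (Dm dx a)) j * Dc dx (\<lambda>j. a j * b j) j
      \<le> bound_density dx dt L \<sigma> a b j
        + (energy_flux dx dt L \<sigma> a b (j + 1) - energy_flux dx dt L \<sigma> a b j)" for j
      using assms(1,2,7) abs_le_linfnorm[OF assms(6)] unfolding L_def
      by (intro pointwise_estimate) auto
  qed
  with assms(1) show ?thesis
    unfolding L_def[symmetric] bound_density_sum(2)[OF assms(1,3,5,6), symmetric]
    by (simp add: ip_def)
qed

end
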